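(* Let $L$ be a subspace of $\bigwedge^{k}V$ and let $I\subseteq[n]$. Consider the procedure: while there exists a pair $i<j$ in $I$ with $N_{j\to i}L\neq L$, choose among all such ordered pairs $(j,i)$ the lexicographically last one, and replace $L$ by $N_{j\to i}L$. Then this procedure terminates after at most $|I|-1+\binom{|I|}{2}$ iterations.
   Context: $\mathbb{F}$ is a field (assumed throughout the paper, for expository purposes, to have characteristic not $2$), $V$ is an $n$-dimensional $\mathbb{F}$-vector space with a fixed basis $e_1,\dots,e_n$, and $\bigwedge V=\bigoplus_k\bigwedge^kV$ is its exterior algebra, with monomial basis $e_S=e_{s_1}\wedge\cdots\wedge e_{s_k}$, $S=\{s_1<\cdots<s_k\}\subseteq[n]$, of $\bigwedge^kV$. For $j\in[n]$, $V^{(j)}$ is the span of $\{e_h:h\neq j\}$. Slow shift: for distinct $i,j\in[n]$ and nonzero $m\in\bigwedge^kV$, write uniquely $m=x+e_j\wedge y$ with $x\in\bigwedge^kV^{(j)}$, $y\in\bigwedge^{k-1}V^{(j)}$, and set $N_{j\to i}m=x+e_i\wedge y$ if this is nonzero, and $N_{j\to i}m=e_j\wedge y$ otherwise (this is the limit as $t\to0$ of the projective action of the linear map $e_j\mapsto e_i+te_j$ fixing the other $e_h$). For a subspace $L$ of $\bigwedge^kV$, $N_{j\to i}L$ is the span of $\{N_{j\to i}m:m\in L\setminus\{0\}\}$; it has the same dimension as $L$. The lexicographic order on ordered pairs $(j,i)$ is based on the usual order on $[n]$. *)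

theory Defs
  imports Main
begin

text \<open>Elements of the exterior algebra of V = F^n (basis e_1..e_n) are represented
  by their coefficient functions on monomials: m S is the coefficient of e_S,
  where S is a finite subset of {1..n}.\<close>

definition kvec :: "nat \<Rightarrow> nat \<Rightarrow> (nat set \<Rightarrow> 'a::field) set" where
  "kvec n k = {m. \<forall>S. m S \<noteq> 0 \<longrightarrow> S \<subseteq> {1..n} \<and> card S = k}"

definition is_subspace :: "nat \<Rightarrow> nat \<Rightarrow> (nat set \<Rightarrow> 'a::field) set \<Rightarrow> bool" where
  "is_subspace n k L \<longleftrightarrow> L \<subseteq> kvec n k \<and> (\<lambda>S. 0) \<in> L \<and>
     (\<forall>x\<in>L. \<forall>y\<in>L. (\<lambda>S. x S + y S) \<in> L) \<and> (\<forall>c. \<forall>x\<in>L. (\<lambda>S. c * x S) \<in> L)"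

definition lin_span :: "(nat set \<Rightarrow> 'a::field) set \<Rightarrow> (nat set \<Rightarrow> 'a) set" where
  "lin_span A = {f. \<exists>F c. finite F \<and> F \<subseteq> A \<and> f = (\<lambda>S. \<Sum>m\<in>F. c m * m S)}"

text \<open>sign of moving e_j past the elements of T smaller than j\<close>
definition ext_sign :: "nat \<Rightarrow> nat set \<Rightarrow> 'a::field" where
  "ext_sign j T = (-1) ^ card {t\<in>T. t < j}"

definition wedge_e :: "nat \<Rightarrow> (nat set \<Rightarrow> 'a::field) \<Rightarrow> (nat set \<Rightarrow> 'a)" where
  "wedge_e i y = (\<lambda>S. if i \<in> S then ext_sign i (S - {i}) * y (S - {i}) else 0)"

text \<open>m = x + e_j \<and> y with x, y not involving e_j\<close>
definition xpart :: "nat \<Rightarrow> (nat set \<Rightarrow> 'a::field) \<Rightarrow> (nat set \<Rightarrow> 'a)" where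
  "xpart j m = (\<lambda>S. if j \<in> S then 0 else m S)"

definition ypart :: "nat \<Rightarrow> (nat set \<Rightarrow> 'a::field) \<Rightarrow> (nat set \<Rightarrow> 'a)" where
  "ypart j m = (\<lambda>T. if j \<in> T then 0 else ext_sign j T * m (insert j T))"

definition slow_shift :: "nat \<Rightarrow> nat \<Rightarrow> (nat set \<Rightarrow> 'a::field) \<Rightarrow> (nat set \<Rightarrow> 'a)" where
  "slow_shift j i m =
     (let r = (\<lambda>S. xpart j m S + wedge_e i (ypart j m) S)
      in if r \<noteq> (\<lambda>S. 0) then r else wedge_e j (ypart j m))"

definition shift_space :: "nat \<Rightarrow> nat \<Rightarrow> (nat set \<Rightarrow> 'a::field) set \<Rightarrow> (nat set \<Rightarrow> 'a) set" where
  "shift_space j i L = lin_span {slow_shift j i m | m. m \<in> L \<and> m \<noteq> (\<lambda>S. 0)}"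

definition bad_pairs :: "nat set \<Rightarrow> (nat set \<Rightarrow> 'a::field) set \<Rightarrow> (nat \<times> nat) set" where
  "bad_pairs I L = {(j, i). i \<in> I \<and> j \<in> I \<and> i < j \<and> shift_space j i L \<noteq> L}"

definition lex_le :: "nat \<times> nat \<Rightarrow> nat \<times> nat \<Rightarrow> bool" where
  "lex_le p q \<longleftrightarrow> fst p < fst q \<or> (fst p = fst q \<and> snd p \<le> snd q)"

definition lex_last :: "(nat \<times> nat) set \<Rightarrow> nat \<times> nat" where
  "lex_last P = (THE p. p \<in> P \<and> (\<forall>q\<in>P. lex_le q p))"

definition proc_step :: "nat set \<Rightarrow> (nat set \<Rightarrow> 'a::field) set \<Rightarrow> (nat set \<Rightarrow> 'a) set" where
  "proc_step I L = (if bad_pairs I L = {} then L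
                    else shift_space (fst (lex_last (bad_pairs I L))) (snd (lex_last (bad_pairs I L))) L)"

end

theory Submission
  imports Defs "HOL.Vector_Spaces" "HOL-Library.Function_Algebras" "HOL-Library.Product_Lexorder"
begin

text \<open>Write \<open>m = x + e\<^sub>j \<and> y\<close>. The slow shift \<open>N\<^sub>j\<^sub>\<rightarrow>\<^sub>i\<close> fixes a subspace \<open>L\<close> exactly when
  \<open>L\<close> is stable under \<open>m \<mapsto> x\<close> and under the substitution \<open>m \<mapsto> x + e\<^sub>i \<and> y\<close>, and
  \<open>N\<^sub>j\<^sub>\<rightarrow>\<^sub>i L\<close> is always stable under \<open>m \<mapsto> x\<close>. Commutation identities between these
  operators show that shifting by \<open>(j, i)\<close> keeps every lexicographically larger pair
  stable, and that the pair \<open>(j, i)\<close> can be chosen a second time in a row only if \<open>L\<close> was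
  not stable under \<open>m \<mapsto> x\<close>, which can only happen at the first step with source \<open>j\<close>.
  Hence the potential
  \<open>#{pairs \<le> (j, i)} + #{non-minimal a \<in> I below j} + [L not stable under m \<mapsto> x]\<close>,
  where \<open>(j, i)\<close> is the pair chosen at \<open>L\<close>, which is at most \<open>(|I| choose 2) + |I| - 1\<close>, strictly decreases along the procedure.\<close>

abbreviation (input) cscale :: "'a::field \<Rightarrow> (nat set \<Rightarrow> 'a) \<Rightarrow> nat set \<Rightarrow> 'a" where
  "cscale c m \<equiv> \<lambda>S. c * m S"

interpretation coeff: vector_space cscale
  by unfold_locales (simp_all add: fun_eq_iff algebra_simps)

lemma subspace_if_is_subspace: "is_subspace n k L \<Longrightarrow> coeff.subspace L"
  by (simp add: is_subspace_def coeff.subspace_def zero_fun_def plus_fun_def)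

lemma sum_fun_apply: "(\<Sum>a\<in>A. f a) x = (\<Sum>a\<in>A. f a x)"
  by (induction A rule: infinite_finite_induct) auto

lemma lin_span_eq_span: "lin_span A = coeff.span A"
  by (auto simp: lin_span_def coeff.span_explicit fun_eq_iff sum_fun_apply)

lemma ext_sign_mult_self: "ext_sign a T * ext_sign a T = (1::'a::field)"
  by (simp add: ext_sign_def power_mult_distrib[symmetric])

lemma ext_sign_insert:
  "ext_sign a (insert b T) = (if b \<in> T \<or> a \<le> b then ext_sign a T else - ext_sign a T :: 'a::field)"
proof -
  have "finite {t\<in>T. t < a}" by (rule finite_subset[of _ "{..<a}"]) auto
  moreover have "{t\<in>insert b T. t < a} = (if b < a then insert b {t\<in>T. t < a} else {t\<in>T. t < a})"
    by auto
  ultimately show ?thesis by (auto simp: ext_sign_def insert_absorb)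
qed

definition jpart :: "nat \<Rightarrow> (nat set \<Rightarrow> 'a::field) \<Rightarrow> nat set \<Rightarrow> 'a" where
  "jpart j m = (\<lambda>S. if j \<in> S then m S else 0)"

definition subst_basis :: "nat \<Rightarrow> nat \<Rightarrow> (nat set \<Rightarrow> 'a::field) \<Rightarrow> nat set \<Rightarrow> 'a" where
  "subst_basis j i m = (\<lambda>S. xpart j m S + wedge_e i (ypart j m) S)"

lemma wedge_e_ypart: "wedge_e j (ypart j m) = jpart j m"
  by (auto simp: fun_eq_iff wedge_e_def ypart_def jpart_def insert_absorb
      mult.assoc[symmetric] ext_sign_mult_self)

lemma slow_shift_eq:
  "slow_shift j i m = (if subst_basis j i m \<noteq> 0 then subst_basis j i m else jpart j m)"
  by (simp add: slow_shift_def subst_basis_def wedge_e_ypart zero_fun_def)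

lemma subst_basis_apply:
  "i \<noteq> j \<Longrightarrow> subst_basis j i m S = (if j \<in> S then 0 else m S + (if i \<in> S then
      ext_sign i (S - {i}) * ext_sign j (S - {i}) * m (insert j (S - {i})) else 0))"
  by (auto simp: subst_basis_def xpart_def wedge_e_def ypart_def)

lemma xpart_add_jpart: "xpart j m + jpart j m = m"
  by (simp add: fun_eq_iff xpart_def jpart_def)

lemma module_hom_xpart: "module_hom cscale cscale (xpart j)"
  by (simp add: module_hom_iff coeff.module_axioms fun_eq_iff xpart_def)

lemma module_hom_subst_basis: "module_hom cscale cscale (subst_basis j i)"
  by (simp add: module_hom_iff coeff.module_axioms fun_eq_iff subst_basis_def xpart_def
      wedge_e_def ypart_def algebra_simps)

lemma subst_basis_diff: "subst_basis j i (m - m') = subst_basis j i m - subst_basis j i m'"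
  by (rule module_hom.diff[OF module_hom_subst_basis])

lemma xpart_xpart: "xpart j (xpart j m) = xpart j m"
  by (simp add: fun_eq_iff xpart_def)

lemma xpart_subst_basis: "i \<noteq> j \<Longrightarrow> xpart j (subst_basis j i m) = subst_basis j i m"
  by (simp add: fun_eq_iff xpart_def subst_basis_apply)

lemma subst_basis_xpart: "subst_basis j i (xpart j m) = xpart j m"
  by (simp add: fun_eq_iff subst_basis_def xpart_def ypart_def wedge_e_def)

text \<open>\<open>xpart j u = u\<close> says that \<open>u\<close> does not involve \<open>e\<^sub>j\<close>.\<close>

lemma subst_basis_if_xpart_eq: "xpart j u = u \<Longrightarrow> subst_basis j i u = u"
  by (metis subst_basis_xpart)

lemma xpart_jpart: "xpart j (jpart j m) = 0"
  by (simp add: fun_eq_iff xpart_def jpart_def)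

lemma subst_basis_jpart: "i \<noteq> j \<Longrightarrow> subst_basis j i (jpart j m) = subst_basis j i m - xpart j m"
  by (simp add: fun_eq_iff subst_basis_apply jpart_def xpart_def)

lemma xpart_subst_basis_commute:
  "j' \<noteq> i \<Longrightarrow> j' \<noteq> j \<Longrightarrow> i \<noteq> j \<Longrightarrow> xpart j' (subst_basis j i m) = subst_basis j i (xpart j' m)"
  by (simp add: fun_eq_iff subst_basis_apply xpart_def)

lemma xpart_jpart_commute: "xpart j' (jpart j m) = jpart j (xpart j' m)"
  by (simp add: fun_eq_iff xpart_def jpart_def)

lemma subst_basis_jpart_commute:
  "i' \<noteq> j \<Longrightarrow> j' \<noteq> j \<Longrightarrow> i' \<noteq> j' \<Longrightarrow> subst_basis j' i' (jpart j m) = jpart j (subst_basis j' i' m)"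
  by (simp add: fun_eq_iff subst_basis_apply jpart_def)

lemma subst_basis_onto_jpart: "j \<noteq> j' \<Longrightarrow> subst_basis j' j (jpart j m) = jpart j (xpart j' m)"
  by (simp add: fun_eq_iff subst_basis_apply jpart_def xpart_def)

lemma set_cases_by_points:
  assumes "\<And>R T. R \<inter> X = {} \<Longrightarrow> T \<in> Pow X \<Longrightarrow> P (T \<union> R)"
  shows "P S"
proof -
  have "P (S \<inter> X \<union> (S - X))" by (rule assms) auto
  then show ?thesis by (simp add: Int_Diff_Un)
qed

lemmas sign_computation_simps = Pow_insert subst_basis_apply jpart_def xpart_def ext_sign_insert
  insert_Diff_if insert_commute ext_sign_mult_self algebra_simps

lemma subst_basis_subst_basis_chain:
  fixes m :: "nat set \<Rightarrow> 'a::field"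
  assumes "i < j" "j < j'"
  shows "subst_basis j' j (subst_basis j i m) = subst_basis j i (xpart j' m)
    + jpart j (subst_basis j' j (jpart j' m) - subst_basis j' i (jpart j' m))"
proof
  fix S
  show "subst_basis j' j (subst_basis j i m) S = (subst_basis j i (xpart j' m)
    + jpart j (subst_basis j' j (jpart j' m) - subst_basis j' i (jpart j' m))) S"
    by (induction S rule: set_cases_by_points[where X = "{i, j, j'}"])
      (use assms in \<open>auto simp: sign_computation_simps\<close>)
qed

lemma subst_basis_chain_defect:
  fixes m :: "nat set \<Rightarrow> 'a::field"
  assumes "i < j" "j < j'"
  shows "subst_basis j i (subst_basis j' j (jpart j' m) - subst_basis j' i (jpart j' m)) = 0"
proof
  fix S
  show "subst_basis j i (subst_basis j' j (jpart j' m) - subst_basis j' i (jpart j' m)) S = 0 S"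
    by (induction S rule: set_cases_by_points[where X = "{i, j, j'}"])
      (use assms in \<open>auto simp: sign_computation_simps\<close>)
qed

lemma subst_basis_commute:
  fixes m :: "nat set \<Rightarrow> 'a::field"
  assumes "i < j" "j < j'" "i' < j'" "i' \<noteq> j"
  shows "subst_basis j' i' (subst_basis j i m) = subst_basis j i (subst_basis j' i' m)"
proof
  fix S
  show "subst_basis j' i' (subst_basis j i m) S = subst_basis j i (subst_basis j' i' m) S"
    by (induction S rule: set_cases_by_points[where X = "{i, j, j', i'}"])
      (use assms in \<open>cases "i' < i"; auto simp: sign_computation_simps\<close>)
qed

lemma shift_space_eq_span: "shift_space j i L = coeff.span (slow_shift j i ` (L - {0}))"
proof -
  have "{slow_shift j i m | m. m \<in> L \<and> m \<noteq> (\<lambda>S. 0)} = slow_shift j i ` (L - {0})"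
    by (auto simp: zero_fun_def)
  then show ?thesis by (simp add: shift_space_def lin_span_eq_span)
qed

lemma subspace_shift_space: "coeff.subspace (shift_space j i L)"
  by (simp add: shift_space_eq_span)

lemma slow_shift_mem_shift_space: "m \<in> L \<Longrightarrow> m \<noteq> 0 \<Longrightarrow> slow_shift j i m \<in> shift_space j i L"
  unfolding shift_space_eq_span by (rule subsetD[OF coeff.span_superset]) blast

lemma subst_basis_mem_shift_space: "m \<in> L \<Longrightarrow> subst_basis j i m \<in> shift_space j i L"
proof (cases "subst_basis j i m = 0")
  case True
  then show ?thesis by (simp add: coeff.subspace_0[OF subspace_shift_space])
next
  case False
  moreover assume "m \<in> L"
  moreover have "m \<noteq> 0" using False module_hom.zero[OF module_hom_subst_basis] by auto
  ultimately show ?thesis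
    using slow_shift_mem_shift_space[of m L j i] by (simp add: slow_shift_eq)
qed

lemma jpart_mem_shift_space:
  assumes "m \<in> L" "subst_basis j i m = 0"
  shows "jpart j m \<in> shift_space j i L"
proof (cases "m = 0")
  case True
  then have "jpart j m = 0" by (simp add: fun_eq_iff jpart_def)
  then show ?thesis by (simp add: coeff.subspace_0[OF subspace_shift_space])
next
  case False
  then show ?thesis
    using assms slow_shift_mem_shift_space[of m L j i] by (simp add: slow_shift_eq)
qed

lemma xpart_mem_shift_space:
  "xpart j u = u \<Longrightarrow> u \<in> L \<Longrightarrow> u \<in> shift_space j i L"
  by (metis subst_basis_if_xpart_eq subst_basis_mem_shift_space)

lemma shift_space_image_subset:
  assumes "module_hom cscale cscale f" "coeff.subspace M"
    and "\<And>m. m \<in> L \<Longrightarrow> f (subst_basis j i m) \<in> M"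
    and "\<And>m. m \<in> L \<Longrightarrow> subst_basis j i m = 0 \<Longrightarrow> f (jpart j m) \<in> M"
  shows "f ` shift_space j i L \<subseteq> M"
proof -
  have "coeff.subspace (f -` M)"
    using assms(1,2) by (rule module_hom.subspace_vimage)
  moreover have "slow_shift j i ` (L - {0}) \<subseteq> f -` M"
    using assms(3,4) by (auto simp: slow_shift_eq)
  ultimately have "coeff.span (slow_shift j i ` (L - {0})) \<subseteq> f -` M"
    by (intro coeff.span_minimal)
  then show ?thesis unfolding shift_space_eq_span by blast
qed

lemma shift_space_subset:
  assumes "coeff.subspace M"
    and "\<And>m. m \<in> L \<Longrightarrow> subst_basis j i m \<in> M"
    and "\<And>m. m \<in> L \<Longrightarrow> subst_basis j i m = 0 \<Longrightarrow> jpart j m \<in> M"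
  shows "shift_space j i L \<subseteq> M"
  using shift_space_image_subset[OF module_hom_linearI[OF coeff.linear_ident] assms] by simp

lemma xpart_image_shift_space:
  assumes "i \<noteq> j"
  shows "xpart j ` shift_space j i L \<subseteq> shift_space j i L"
proof (rule shift_space_image_subset[OF module_hom_xpart subspace_shift_space])
  fix m assume "m \<in> L"
  then show "xpart j (subst_basis j i m) \<in> shift_space j i L"
    by (simp add: xpart_subst_basis assms subst_basis_mem_shift_space)
next
  fix m show "xpart j (jpart j m) \<in> shift_space j i L"
    by (simp add: xpart_jpart coeff.subspace_0[OF subspace_shift_space])
qed

lemma jpart_mem_if_xpart_stable:
  assumes "coeff.subspace L" "xpart j ` L \<subseteq> L" "m \<in> L"
  shows "jpart j m \<in> L"
proof -
  have "jpart j m = m - xpart j m"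
    by (simp add: fun_eq_iff jpart_def xpart_def)
  then show ?thesis using assms by (auto intro: coeff.subspace_diff)
qed

lemma shift_space_eq_iff:
  assumes "i \<noteq> j" "coeff.subspace L"
  shows "shift_space j i L = L \<longleftrightarrow> xpart j ` L \<subseteq> L \<and> subst_basis j i ` L \<subseteq> L"
proof
  assume "shift_space j i L = L"
  then show "xpart j ` L \<subseteq> L \<and> subst_basis j i ` L \<subseteq> L"
    using xpart_image_shift_space[OF assms(1)] subst_basis_mem_shift_space by blast
next
  assume stable: "xpart j ` L \<subseteq> L \<and> subst_basis j i ` L \<subseteq> L"
  note jpart_mem = jpart_mem_if_xpart_stable[OF assms(2) stable[THEN conjunct1]]
  show "shift_space j i L = L"
  proof
    show "shift_space j i L \<subseteq> L"
      using stable jpart_mem by (intro shift_space_subset[OF assms(2)]) auto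
  next
    show "L \<subseteq> shift_space j i L"
    proof
      fix m assume "m \<in> L"
      have "xpart j m \<in> shift_space j i L"
        using \<open>m \<in> L\<close> stable by (intro xpart_mem_shift_space) (auto simp: xpart_xpart)
      moreover
      txt \<open>\<open>e\<^sub>j \<and> y\<close> is the \<open>e\<^sub>j\<close>-part of an element of \<open>L\<close> killed by the substitution.\<close>
      define m' where "m' = jpart j m - subst_basis j i (jpart j m)"
      have "m' \<in> L"
        unfolding m'_def using \<open>m \<in> L\<close> stable jpart_mem by (intro coeff.subspace_diff[OF assms(2)]) auto
      moreover have "subst_basis j i m' = 0"
        by (simp add: m'_def subst_basis_diff subst_basis_if_xpart_eq xpart_subst_basis assms(1))
      moreover have "jpart j m' = jpart j m"
        by (simp add: m'_def fun_eq_iff jpart_def subst_basis_apply assms(1))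
      ultimately have "xpart j m + jpart j m \<in> shift_space j i L"
        using jpart_mem_shift_space by (metis coeff.subspace_add subspace_shift_space)
      then show "m \<in> shift_space j i L" by (simp add: xpart_add_jpart)
    qed
  qed
qed

lemma shift_space_idem:
  assumes "i \<noteq> j" "coeff.subspace L" "xpart j ` L \<subseteq> L"
  shows "shift_space j i (shift_space j i L) = shift_space j i L"
proof -
  have "subst_basis j i ` shift_space j i L \<subseteq> shift_space j i L"
  proof (rule shift_space_image_subset[OF module_hom_subst_basis subspace_shift_space])
    fix m assume "m \<in> L"
    then show "subst_basis j i (subst_basis j i m) \<in> shift_space j i L"
      by (simp add: subst_basis_if_xpart_eq xpart_subst_basis assms(1) subst_basis_mem_shift_space)
  next
    fix m assume "m \<in> L" "subst_basis j i m = 0"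
    moreover have "xpart j m \<in> shift_space j i L"
      using \<open>m \<in> L\<close> assms(3) by (intro xpart_mem_shift_space) (auto simp: xpart_xpart)
    ultimately show "subst_basis j i (jpart j m) \<in> shift_space j i L"
      using coeff.subspace_neg[OF subspace_shift_space] by (simp add: subst_basis_jpart assms(1))
  qed
  then show ?thesis
    using xpart_image_shift_space[OF assms(1)]
    by (simp add: shift_space_eq_iff[OF assms(1) subspace_shift_space])
qed

lemma shift_space_keeps_fixed_same_source:
  assumes "i \<noteq> j" "i' \<noteq> j" "coeff.subspace L" "shift_space j i' L = L"
  shows "shift_space j i' (shift_space j i L) = shift_space j i L"
proof -
  have stable: "xpart j ` L \<subseteq> L" "subst_basis j i' ` L \<subseteq> L"
    using assms(4) by (simp_all add: shift_space_eq_iff[OF assms(2,3)])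
  have "subst_basis j i' ` shift_space j i L \<subseteq> shift_space j i L"
  proof (rule shift_space_image_subset[OF module_hom_subst_basis subspace_shift_space])
    fix m assume "m \<in> L"
    then show "subst_basis j i' (subst_basis j i m) \<in> shift_space j i L"
      by (simp add: subst_basis_if_xpart_eq xpart_subst_basis assms(1) subst_basis_mem_shift_space)
  next
    fix m assume "m \<in> L"
    then have "subst_basis j i' m \<in> shift_space j i L" "xpart j m \<in> shift_space j i L"
      using stable by (auto intro!: xpart_mem_shift_space simp: xpart_xpart xpart_subst_basis assms(2))
    then show "subst_basis j i' (jpart j m) \<in> shift_space j i L"
      by (simp add: subst_basis_jpart assms(2) coeff.subspace_diff[OF subspace_shift_space])
  qed
  then show ?thesis
    using xpart_image_shift_space[OF assms(1)]
    by (simp add: shift_space_eq_iff[OF assms(2) subspace_shift_space])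
qed

lemma xpart_image_shift_space_other:
  assumes "j' \<noteq> i" "j' \<noteq> j" "i \<noteq> j" "xpart j' ` L \<subseteq> L"
  shows "xpart j' ` shift_space j i L \<subseteq> shift_space j i L"
proof (rule shift_space_image_subset[OF module_hom_xpart subspace_shift_space])
  fix m assume "m \<in> L"
  then show "xpart j' (subst_basis j i m) \<in> shift_space j i L"
    using assms by (auto simp: xpart_subst_basis_commute intro: subst_basis_mem_shift_space)
next
  fix m assume "m \<in> L" "subst_basis j i m = 0"
  then have "subst_basis j i (xpart j' m) = 0"
    using assms module_hom.zero[OF module_hom_xpart] by (metis xpart_subst_basis_commute)
  then show "xpart j' (jpart j m) \<in> shift_space j i L"
    using \<open>m \<in> L\<close> assms(4) by (auto simp: xpart_jpart_commute intro: jpart_mem_shift_space)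
qed

lemma subst_basis_image_shift_space_larger_source:
  assumes "i < j" "j < j'" "i' < j'" "coeff.subspace L"
    and stable: "xpart j' ` L \<subseteq> L" "subst_basis j' j ` L \<subseteq> L" "subst_basis j' i ` L \<subseteq> L"
      "subst_basis j' i' ` L \<subseteq> L"
  shows "subst_basis j' i' ` shift_space j i L \<subseteq> shift_space j i L"
proof (rule shift_space_image_subset[OF module_hom_subst_basis subspace_shift_space])
  fix m assume "m \<in> L"
  show "subst_basis j' i' (subst_basis j i m) \<in> shift_space j i L"
  proof (cases "i' = j")
    case True
    define D where "D = subst_basis j' j (jpart j' m) - subst_basis j' i (jpart j' m)"
    have "jpart j' m \<in> L"
      using jpart_mem_if_xpart_stable[OF assms(4) stable(1) \<open>m \<in> L\<close>] .
    then have "D \<in> L"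
      unfolding D_def using stable(2,3) by (intro coeff.subspace_diff[OF assms(4)]) auto
    moreover have "subst_basis j i D = 0"
      unfolding D_def using subst_basis_chain_defect[OF assms(1,2)] .
    ultimately have "jpart j D \<in> shift_space j i L"
      by (rule jpart_mem_shift_space)
    moreover have "subst_basis j i (xpart j' m) \<in> shift_space j i L"
      using \<open>m \<in> L\<close> stable(1) by (auto intro: subst_basis_mem_shift_space)
    ultimately show ?thesis
      unfolding True subst_basis_subst_basis_chain[OF assms(1,2)] D_def
      by (rule coeff.subspace_add[OF subspace_shift_space, rotated])
  next
    case False
    then show ?thesis
      using \<open>m \<in> L\<close> stable(4)
      by (auto simp: subst_basis_commute[OF assms(1-3)] intro: subst_basis_mem_shift_space)
  qed
next
  fix m assume "m \<in> L" "subst_basis j i m = 0"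
  show "subst_basis j' i' (jpart j m) \<in> shift_space j i L"
  proof (cases "i' = j")
    case True
    have "subst_basis j i (xpart j' m) = 0"
      using \<open>subst_basis j i m = 0\<close> assms(1,2) module_hom.zero[OF module_hom_xpart]
      by (metis xpart_subst_basis_commute less_irrefl less_trans)
    then show ?thesis
      using \<open>m \<in> L\<close> stable(1) assms(2) True
      by (auto simp: subst_basis_onto_jpart intro: jpart_mem_shift_space)
  next
    case False
    have "subst_basis j i (subst_basis j' i' m) = 0"
      using \<open>subst_basis j i m = 0\<close> module_hom.zero[OF module_hom_subst_basis]
      by (metis subst_basis_commute[OF assms(1-3) False])
    then show ?thesis
      using \<open>m \<in> L\<close> stable(4) assms(2,3) False
      by (auto simp: subst_basis_jpart_commute intro: jpart_mem_shift_space)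
  qed
qed

lemma shift_space_keeps_fixed_larger_source:
  assumes "i < j" "j < j'" "i' < j'" "coeff.subspace L"
    and "shift_space j' j L = L" "shift_space j' i L = L" "shift_space j' i' L = L"
  shows "shift_space j' i' (shift_space j i L) = shift_space j i L"
proof -
  have "xpart j' ` L \<subseteq> L" "subst_basis j' j ` L \<subseteq> L" "subst_basis j' i ` L \<subseteq> L"
    "subst_basis j' i' ` L \<subseteq> L"
    using assms by (simp_all add: shift_space_eq_iff)
  then show ?thesis
    using assms(1-4) xpart_image_shift_space_other[of j' i j L]
      subst_basis_image_shift_space_larger_source[of i j j' i' L]
    by (simp add: shift_space_eq_iff subspace_shift_space)
qed

definition ordered_pairs :: "nat set \<Rightarrow> (nat \<times> nat) set" where
  "ordered_pairs I = {(j, i). i \<in> I \<and> j \<in> I \<and> i < j}"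

lemma finite_ordered_pairs: "finite I \<Longrightarrow> finite (ordered_pairs I)"
  by (rule finite_subset[of _ "I \<times> I"]) (auto simp: ordered_pairs_def)

lemma card_ordered_pairs_le:
  assumes "finite I"
  shows "card (ordered_pairs I) \<le> card I choose 2"
proof -
  have "inj_on (\<lambda>(j, i). {i, j}) (ordered_pairs I)"
    by (auto simp: inj_on_def ordered_pairs_def doubleton_eq_iff)
  moreover have "(\<lambda>(j, i). {i, j}) ` ordered_pairs I \<subseteq> {B. B \<subseteq> I \<and> card B = 2}"
    by (auto simp: ordered_pairs_def)
  moreover have "finite {B. B \<subseteq> I \<and> card B = 2}"
    using assms by simp
  ultimately have "card (ordered_pairs I) \<le> card {B. B \<subseteq> I \<and> card B = 2}"
    by (rule card_inj_on_le)
  then show ?thesis using n_subsets[OF assms] by simp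
qed

lemma bad_pairs_subset: "bad_pairs I L \<subseteq> ordered_pairs I"
  by (auto simp: bad_pairs_def ordered_pairs_def)

lemma finite_bad_pairs: "finite I \<Longrightarrow> finite (bad_pairs I L)"
  by (rule finite_subset[OF bad_pairs_subset finite_ordered_pairs])

lemma shift_space_eq_if_not_bad:
  "(j, i) \<in> ordered_pairs I \<Longrightarrow> (j, i) \<notin> bad_pairs I L \<Longrightarrow> shift_space j i L = L"
  by (auto simp: bad_pairs_def ordered_pairs_def)

lemma lex_le_iff_less_eq: "lex_le p q \<longleftrightarrow> p \<le> q"
  by (cases p, cases q) (auto simp: lex_le_def)

lemma lex_last_eq_Max: "finite P \<Longrightarrow> P \<noteq> {} \<Longrightarrow> lex_last P = Max P"
  unfolding lex_last_def lex_le_iff_less_eq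
proof (rule the_equality)
  show "finite P \<Longrightarrow> P \<noteq> {} \<Longrightarrow> Max P \<in> P \<and> (\<forall>q\<in>P. q \<le> Max P)"
    by simp
  show "finite P \<Longrightarrow> p \<in> P \<and> (\<forall>q\<in>P. q \<le> p) \<Longrightarrow> p = Max P" for p
    by (metis Max_eqI)
qed

lemma proc_step_eq_shift_space:
  assumes "finite I" "Max (bad_pairs I L) = (j, i)" "bad_pairs I L \<noteq> {}"
  shows "proc_step I L = shift_space j i L"
  using assms by (simp add: proc_step_def lex_last_eq_Max finite_bad_pairs)

lemma subspace_proc_step: "coeff.subspace L \<Longrightarrow> coeff.subspace (proc_step I L)"
  by (simp add: proc_step_def subspace_shift_space)

lemma bad_pairs_proc_step_le_Max:
  assumes "finite I" "coeff.subspace L" "bad_pairs I L \<noteq> {}"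
    and "q \<in> bad_pairs I (proc_step I L)"
  shows "q \<le> Max (bad_pairs I L)"
proof (rule ccontr)
  obtain j i where ji: "Max (bad_pairs I L) = (j, i)" by fastforce
  obtain b a where q: "q = (b, a)" by fastforce
  assume "\<not> q \<le> Max (bad_pairs I L)"
  then have larger: "(j, i) < (b, a)" by (simp only: q ji not_le)
  have "(j, i) \<in> ordered_pairs I"
    using Max_in[OF finite_bad_pairs[OF assms(1)] assms(3)] bad_pairs_subset by (auto simp: ji)
  moreover have "(b, a) \<in> ordered_pairs I"
    using assms(4) bad_pairs_subset by (auto simp: q)
  ultimately have ba: "a \<in> I" "b \<in> I" "a < b" and ji_in: "i \<in> I" "j \<in> I" "i < j"
    by (auto simp: ordered_pairs_def)
  have fixed: "shift_space b' a' L = L" if "(b', a') \<in> ordered_pairs I" "(j, i) < (b', a')" for a' b'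
    using that Max_ge[OF finite_bad_pairs[OF assms(1)], of "(b', a')" L] shift_space_eq_if_not_bad
    by (fastforce simp: ji)
  have "shift_space b a (shift_space j i L) = shift_space j i L"
  proof (cases "j < b")
    case True
    then show ?thesis
      using ba ji_in fixed
      by (intro shift_space_keeps_fixed_larger_source assms(2)) (auto simp: ordered_pairs_def)
  next
    case False
    then have "b = j" "i < a" using larger by auto
    then show ?thesis
      using ba ji_in fixed[of j a] assms(2)
      by (simp add: ordered_pairs_def shift_space_keeps_fixed_same_source)
  qed
  then show False
    using assms(4) proc_step_eq_shift_space[OF assms(1) ji assms(3)] by (simp add: q bad_pairs_def)
qed

definition rank_potential :: "nat set \<Rightarrow> nat \<times> nat \<Rightarrow> nat" where
  "rank_potential I p =
     card {q \<in> ordered_pairs I. q \<le> p} + card {a \<in> I. (\<exists>b\<in>I. b < a) \<and> a < fst p}"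

lemma lower_pairs_psubset:
  assumes "p \<in> ordered_pairs I" "q < p"
  shows "{r \<in> ordered_pairs I. r \<le> q} \<subset> {r \<in> ordered_pairs I. r \<le> p}"
proof -
  have "{r \<in> ordered_pairs I. r \<le> q} \<subseteq> {r \<in> ordered_pairs I. r \<le> p}"
    using order.trans[OF _ less_imp_le[OF assms(2)]] by blast
  moreover have "p \<notin> {r \<in> ordered_pairs I. r \<le> q}"
    using leD[of p q] assms(2) by blast
  ultimately show ?thesis using assms(1) by blast
qed

lemma rank_potential_pos:
  assumes "finite I" "p \<in> ordered_pairs I"
  shows "0 < rank_potential I p"
proof -
  have "p \<in> {q \<in> ordered_pairs I. q \<le> p}" using assms(2) by blast
  moreover have "finite {q \<in> ordered_pairs I. q \<le> p}"
    using finite_ordered_pairs[OF assms(1)] by simp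
  ultimately have "0 < card {q \<in> ordered_pairs I. q \<le> p}"
    using card_gt_0_iff by blast
  then show ?thesis by (simp add: rank_potential_def)
qed

lemma rank_potential_le:
  assumes "finite I" "(j, i) \<in> ordered_pairs I"
  shows "rank_potential I (j, i) + 2 \<le> card I + (card I choose 2)"
proof -
  have ji: "i \<in> I" "j \<in> I" "i < j" using assms(2) by (auto simp: ordered_pairs_def)
  have "card {q \<in> ordered_pairs I. q \<le> (j, i)} \<le> card (ordered_pairs I)"
    by (rule card_mono) (auto simp: finite_ordered_pairs assms(1))
  also have "\<dots> \<le> card I choose 2" using card_ordered_pairs_le[OF assms(1)] .
  finally have pairs: "card {q \<in> ordered_pairs I. q \<le> (j, i)} \<le> card I choose 2" .
  have "Min I \<in> I" "Min I < j"
    using Min_in[OF assms(1)] Min_le[OF assms(1) \<open>i \<in> I\<close>] ji by auto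
  then have two: "{j, Min I} \<subseteq> I" "card {j, Min I} = 2"
    using ji by auto
  have "{a \<in> I. (\<exists>b\<in>I. b < a) \<and> a < j} \<subseteq> I - {j, Min I}"
    using assms(1) by (auto dest: Min_le)
  then have "card {a \<in> I. (\<exists>b\<in>I. b < a) \<and> a < j} \<le> card (I - {j, Min I})"
    using assms(1) by (intro card_mono) auto
  also have "\<dots> = card I - 2"
    using assms(1) two by (simp add: card_Diff_subset)
  finally have "card {a \<in> I. (\<exists>b\<in>I. b < a) \<and> a < j} + 2 \<le> card I"
    using card_mono[OF assms(1) two(1)] two(2) by linarith
  with pairs show ?thesis by (simp add: rank_potential_def)
qed

lemma rank_potential_less:
  assumes "finite I" "p \<in> ordered_pairs I" "q < p"
  shows "rank_potential I q < rank_potential I p"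
proof -
  have "{r \<in> ordered_pairs I. r \<le> q} \<subset> {r \<in> ordered_pairs I. r \<le> p}"
    using lower_pairs_psubset assms(2,3) .
  then have "card {r \<in> ordered_pairs I. r \<le> q} < card {r \<in> ordered_pairs I. r \<le> p}"
    by (rule psubset_card_mono[rotated]) (simp add: finite_ordered_pairs assms(1))
  moreover have "fst q \<le> fst p" using assms(3) by (auto simp: less_prod_def)
  then have "card {a \<in> I. (\<exists>b\<in>I. b < a) \<and> a < fst q} \<le> card {a \<in> I. (\<exists>b\<in>I. b < a) \<and> a < fst p}"
    by (intro card_mono) (auto simp: assms(1))
  ultimately show ?thesis by (simp add: rank_potential_def)
qed

lemma rank_potential_fst_less:
  assumes "finite I" "p \<in> ordered_pairs I" "(j, i) \<in> ordered_pairs I" "j < fst p"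
  shows "rank_potential I (j, i) + 1 < rank_potential I p"
proof -
  have "(j, i) < p" using assms(4) by (simp add: less_prod_def)
  then have "card {r \<in> ordered_pairs I. r \<le> (j, i)} < card {r \<in> ordered_pairs I. r \<le> p}"
    using lower_pairs_psubset[OF assms(2)]
    by (intro psubset_card_mono) (simp_all add: finite_ordered_pairs assms(1))
  moreover have "j \<in> {a \<in> I. (\<exists>b\<in>I. b < a) \<and> a < fst p}"
    using assms(3,4) by (auto simp: ordered_pairs_def)
  then have "{a \<in> I. (\<exists>b\<in>I. b < a) \<and> a < j} \<subset> {a \<in> I. (\<exists>b\<in>I. b < a) \<and> a < fst p}"
    using assms(4) by auto
  then have "card {a \<in> I. (\<exists>b\<in>I. b < a) \<and> a < j} < card {a \<in> I. (\<exists>b\<in>I. b < a) \<and> a < fst p}"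
    by (rule psubset_card_mono[rotated]) (simp add: assms(1))
  ultimately show ?thesis by (simp add: rank_potential_def)
qed

text \<open>The last summand accounts for the one possible repetition of the pair \<open>(j, i)\<close>.\<close>

definition potential :: "nat set \<Rightarrow> (nat set \<Rightarrow> 'a::field) set \<Rightarrow> nat" where
  "potential I L = (if bad_pairs I L = {} then 0 else
     rank_potential I (Max (bad_pairs I L))
       + (if xpart (fst (Max (bad_pairs I L))) ` L \<subseteq> L then 0 else 1))"

lemma potential_eq:
  "bad_pairs I L \<noteq> {} \<Longrightarrow> Max (bad_pairs I L) = (j, i) \<Longrightarrow>
    potential I L = rank_potential I (j, i) + (if xpart j ` L \<subseteq> L then 0 else 1)"
  by (simp add: potential_def)

lemma Max_bad_pairs_mem:
  "finite I \<Longrightarrow> bad_pairs I L \<noteq> {} \<Longrightarrow> Max (bad_pairs I L) \<in> ordered_pairs I"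
  using Max_in[OF finite_bad_pairs] bad_pairs_subset by blast

lemma potential_eq_0_iff:
  assumes "finite I"
  shows "potential I L = 0 \<longleftrightarrow> bad_pairs I L = {}"
proof
  show "bad_pairs I L = {}" if "potential I L = 0"
  proof (rule ccontr)
    assume "bad_pairs I L \<noteq> {}"
    then show False
      using that rank_potential_pos[OF assms Max_bad_pairs_mem[OF assms \<open>bad_pairs I L \<noteq> {}\<close>]]
      by (simp add: potential_def)
  qed
qed (simp add: potential_def)

lemma potential_le:
  assumes "finite I"
  shows "potential I L \<le> card I - 1 + (card I choose 2)"
proof (cases "bad_pairs I L = {}")
  case False
  obtain j i where ji: "Max (bad_pairs I L) = (j, i)" by fastforce
  then have "(j, i) \<in> ordered_pairs I"
    using Max_bad_pairs_mem[OF assms False] by simp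
  then have "rank_potential I (j, i) + 2 \<le> card I + (card I choose 2)" "0 < card I"
    using rank_potential_le[OF assms] assms by (auto simp: ordered_pairs_def card_gt_0_iff)
  then show ?thesis using potential_eq[OF False ji] by auto
qed (simp add: potential_def)

lemma potential_proc_step_less:
  assumes "finite I" "coeff.subspace L" "bad_pairs I L \<noteq> {}"
  shows "potential I (proc_step I L) < potential I L"
proof -
  obtain j i where ji: "Max (bad_pairs I L) = (j, i)" by fastforce
  have ji_pair: "(j, i) \<in> ordered_pairs I"
    using Max_bad_pairs_mem[OF assms(1,3)] by (simp add: ji)
  then have "i \<noteq> j" by (simp add: ordered_pairs_def)
  define L' where "L' = shift_space j i L"
  have step: "proc_step I L = L'"
    unfolding L'_def using proc_step_eq_shift_space[OF assms(1) ji assms(3)] .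
  note pot = potential_eq[OF assms(3) ji]
  show ?thesis
  proof (cases "bad_pairs I L' = {}")
    case True
    then show ?thesis using pot step rank_potential_pos[OF assms(1) ji_pair] by (simp add: potential_def)
  next
    case False
    obtain j' i' where ji': "Max (bad_pairs I L') = (j', i')" by fastforce
    have ji'_mem: "(j', i') \<in> bad_pairs I L'"
      using Max_in[OF finite_bad_pairs[OF assms(1)] False] by (simp add: ji')
    then have ji'_pair: "(j', i') \<in> ordered_pairs I"
      using bad_pairs_subset by blast
    have "(j', i') \<le> (j, i)"
      using bad_pairs_proc_step_le_Max[OF assms ji'_mem[folded step]] by (simp only: ji)
    have ji'_bad: "shift_space j' i' L' \<noteq> L'"
      using ji'_mem by (simp add: bad_pairs_def)
    note pot' = potential_eq[OF False ji']
    have stable': "xpart j ` L' \<subseteq> L'"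
      unfolding L'_def using xpart_image_shift_space[OF \<open>i \<noteq> j\<close>] .
    consider "j' < j" | "j' = j" "i' < i" | "(j', i') = (j, i)"
      using \<open>(j', i') \<le> (j, i)\<close> by (auto simp: le_less)
    then show ?thesis
    proof cases
      case 1
      then show ?thesis using rank_potential_fst_less[OF assms(1) ji_pair ji'_pair] pot pot' step by simp
    next
      case 2
      then have "rank_potential I (j', i') < rank_potential I (j, i)"
        using rank_potential_less[OF assms(1) ji_pair] by simp
      then show ?thesis using 2 pot pot' step stable' by simp
    next
      case 3
      then have "\<not> xpart j ` L \<subseteq> L"
        using ji'_bad shift_space_idem[OF \<open>i \<noteq> j\<close> assms(2)] by (auto simp: L'_def)
      then show ?thesis using 3 pot pot' step stable' by simp
    qed
  qed
qed

lemma funpow_reaches_zero: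
  fixes \<phi> :: "'b \<Rightarrow> nat"
  assumes "\<And>x. P x \<Longrightarrow> P (f x)" "\<And>x. P x \<Longrightarrow> \<phi> x \<noteq> 0 \<Longrightarrow> \<phi> (f x) < \<phi> x" "P x"
  shows "\<exists>t \<le> \<phi> x. \<phi> ((f ^^ t) x) = 0"
  using assms(3)
proof (induction "\<phi> x" arbitrary: x rule: less_induct)
  case less
  show ?case
  proof (cases "\<phi> x = 0")
    case True
    then show ?thesis by (intro exI[of _ 0]) simp
  next
    case False
    then have decrease: "\<phi> (f x) < \<phi> x" using assms(2) less.prems by blast
    then obtain t where "t \<le> \<phi> (f x)" "\<phi> ((f ^^ t) (f x)) = 0"
      using less.hyps assms(1)[OF less.prems] by blast
    then show ?thesis
      using decrease by (intro exI[of _ "Suc t"]) (simp add: funpow_swap1)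
  qed
qed

theorem proposition3p10:
  fixes L :: "(nat set \<Rightarrow> 'a::field) set" and n k :: nat and I :: "nat set"
  assumes "(2::'a) \<noteq> 0"
    and "is_subspace n k L"
    and "I \<subseteq> {1..n}"
  shows "\<exists>t \<le> card I - 1 + (card I choose 2). bad_pairs I ((proc_step I ^^ t) L) = {}"
proof -
  have fin: "finite I" using assms(3) finite_subset by blast
  have "\<exists>t \<le> potential I L. potential I ((proc_step I ^^ t) L) = 0"
  proof (rule funpow_reaches_zero[where P = coeff.subspace])
    show "coeff.subspace L" using subspace_if_is_subspace[OF assms(2)] .
  next
    show "coeff.subspace (proc_step I M)" if "coeff.subspace M" for M
      using that by (rule subspace_proc_step)
  next
    show "potential I (proc_step I M) < potential I M"
      if "coeff.subspace M" "potential I M \<noteq> 0" for M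
      using that by (intro potential_proc_step_less[OF fin]) (simp_all add: potential_eq_0_iff[OF fin])
  qed
  then obtain t where t: "t \<le> potential I L" "potential I ((proc_step I ^^ t) L) = 0"
    by blast
  have "t \<le> card I - 1 + (card I choose 2)"
    using t(1) potential_le[OF fin, of L] by (rule order_trans)
  moreover have "bad_pairs I ((proc_step I ^^ t) L) = {}"
    using t(2) potential_eq_0_iff[OF fin] by blast
  ultimately show ?thesis by blast
qed

end
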